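(* Let $G$ be a finitely generated group with finite generating set $E$ closed under inverses, $A$ a finite alphabet, and $\Phi:A^G\to A^G$ a cellular automaton. Then $\Phi$ is not sensitive to initial conditions if and only if for every $k\in\mathbb{N}$ there exists a $B_G(1_G,k)$-blocking word for $\Phi$.
   Context: $B_G(g,k)$ is the closed ball of radius $k$ in the word metric $d_E$ of $G$. The Cantor metric is $d^E(x,y)=2^{-k}$ with $k=\min\{d_E(1_G,g):x(g)\neq y(g)\}$; $B^E(x,r)$ its closed ball. A cellular automaton is a map $\Phi:A^G\to A^G$ given by a finite $S\subseteq G$ and $\mu:A^S\to A$ via $\Phi(x)(g)=\mu(s\mapsto x(gs))$. $\Phi$ is sensitive to initial conditions if $\exists\epsilon>0\,\forall x\,\forall\delta>0\,\exists t\in\mathbb{N}\,\exists y\in B^E(x,\delta)$ with $\Phi^t(y)\notin B^E(\Phi^t(x),\epsilon)$. Blocking word: for finite $V\subseteq G$ and a pattern $u\in A^L$ with $L\subseteq G$ finite, $u$ is $V$-blocking for $\Phi$ if for all $x,y\in A^G$ with $x|_L=y|_L=u$ one has $\Phi^t(x)|_V=\Phi^t(y)|_V$ for all $t\in\mathbb{N}$. *)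

theory Defs
  imports Complex_Main "HOL-Library.FuncSet"
begin

text \<open>The group G is a type of class group_add (written additively, not necessarily
commutative): the product g s is g + s and 1_G is 0.
Configurations A^G are functions of type 'g => 'a with 'a a finite type.\<close>

definition generates :: "'g::group_add set \<Rightarrow> bool" where
  "generates E \<longleftrightarrow> (\<forall>g. \<exists>xs. set xs \<subseteq> E \<and> sum_list xs = g)"

definition wlen :: "'g::group_add set \<Rightarrow> 'g \<Rightarrow> nat" where
  "wlen E g = (LEAST n. \<exists>xs. length xs = n \<and> set xs \<subseteq> E \<and> sum_list xs = g)"

definition wdist :: "'g::group_add set \<Rightarrow> 'g \<Rightarrow> 'g \<Rightarrow> nat" where
  "wdist E g h = wlen E (- g + h)"

definition gball :: "'g::group_add set \<Rightarrow> 'g \<Rightarrow> nat \<Rightarrow> 'g set" where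
  "gball E g k = {h. wdist E g h \<le> k}"

definition cdist :: "'g::group_add set \<Rightarrow> ('g \<Rightarrow> 'a) \<Rightarrow> ('g \<Rightarrow> 'a) \<Rightarrow> real" where
  "cdist E x y = (if x = y then 0
     else (1/2) ^ (LEAST k. \<exists>g. x g \<noteq> y g \<and> wdist E 0 g = k))"

definition cball :: "'g::group_add set \<Rightarrow> ('g \<Rightarrow> 'a) \<Rightarrow> real \<Rightarrow> ('g \<Rightarrow> 'a) set" where
  "cball E x r = {y. cdist E x y \<le> r}"

definition is_CA :: "(('g::group_add \<Rightarrow> 'a) \<Rightarrow> ('g \<Rightarrow> 'a)) \<Rightarrow> bool" where
  "is_CA \<Phi> \<longleftrightarrow> (\<exists>S (\<mu> :: ('g \<Rightarrow> 'a) \<Rightarrow> 'a). finite S \<and>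
      (\<forall>x g. \<Phi> x g = \<mu> (restrict (\<lambda>s. x (g + s)) S)))"

definition sensitive :: "'g::group_add set \<Rightarrow> (('g \<Rightarrow> 'a) \<Rightarrow> ('g \<Rightarrow> 'a)) \<Rightarrow> bool" where
  "sensitive E \<Phi> \<longleftrightarrow> (\<exists>\<epsilon>>0. \<forall>x. \<forall>\<delta>>0. \<exists>t::nat. \<exists>y \<in> cball E x \<delta>.
      (\<Phi> ^^ t) y \<notin> cball E ((\<Phi> ^^ t) x) \<epsilon>)"

text \<open>u (pattern on the finite support L; values outside L are irrelevant) is V-blocking.\<close>
definition blocking :: "(('g \<Rightarrow> 'a) \<Rightarrow> ('g \<Rightarrow> 'a)) \<Rightarrow> 'g set \<Rightarrow> 'g set \<Rightarrow> ('g \<Rightarrow> 'a) \<Rightarrow> bool" where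
  "blocking \<Phi> V L u \<longleftrightarrow> (\<forall>x y. (\<forall>l\<in>L. x l = u l \<and> y l = u l) \<longrightarrow>
      (\<forall>t::nat. \<forall>v\<in>V. (\<Phi> ^^ t) x v = (\<Phi> ^^ t) y v))"

end

theory Submission
  imports Defs
begin

text \<open>The closed Cantor ball of radius 2^-m around x is the cylinder of configurations
  agreeing with x on the elements of word length < m, a finite set because E is finite and
  generates G. Non-sensitivity therefore says that for every k some cylinder around some x
  is carried, at all times, into configurations agreeing with the orbit of x on B(1,k),
  i.e. that the restriction of x to the base of the cylinder is a B(1,k)-blocking word;
  conversely, the finite support of a blocking word lies in the base of such a cylinder.\<close>

lemma cdist_le_half_power_iff:
  "cdist E x y \<le> (1/2::real) ^ m \<longleftrightarrow> (\<forall>g. wlen E g < m \<longrightarrow> y g = x g)"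
proof (cases "x = y")
  case True
  then show ?thesis by (simp add: cdist_def)
next
  case False
  let ?K = "LEAST k. \<exists>g. x g \<noteq> y g \<and> wlen E g = k"
  have cdist: "cdist E x y = (1/2) ^ ?K"
    using False by (simp add: cdist_def wdist_def)
  from False obtain g0 where "x g0 \<noteq> y g0" by auto
  have "\<exists>g. x g \<noteq> y g \<and> wlen E g = ?K"
    by (rule LeastI_ex) (use \<open>x g0 \<noteq> y g0\<close> in blast)
  then obtain g where g: "x g \<noteq> y g" "wlen E g = ?K" by blast
  have least: "?K \<le> wlen E h" if "x h \<noteq> y h" for h
    using that by (blast intro: Least_le)
  have "(1/2::real) ^ ?K \<le> (1/2) ^ m \<longleftrightarrow> m \<le> ?K"
    by (intro power_decreasing_iff) auto
  also have "\<dots> \<longleftrightarrow> (\<forall>h. wlen E h < m \<longrightarrow> y h = x h)"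
  proof
    assume "m \<le> ?K"
    show "\<forall>h. wlen E h < m \<longrightarrow> y h = x h"
    proof (intro allI impI)
      fix h
      assume "wlen E h < m"
      with \<open>m \<le> ?K\<close> have "\<not> ?K \<le> wlen E h" by simp
      with least show "y h = x h" by metis
    qed
  next
    assume "\<forall>h. wlen E h < m \<longrightarrow> y h = x h"
    then show "m \<le> ?K"
      using g by (metis not_le)
  qed
  finally show ?thesis by (simp add: cdist)
qed

definition cylinder :: "'g::group_add set \<Rightarrow> ('g \<Rightarrow> 'a) \<Rightarrow> nat \<Rightarrow> ('g \<Rightarrow> 'a) set" where
  "cylinder E x m = {y. \<forall>g. wlen E g < m \<longrightarrow> y g = x g}"

lemma cball_half_power_eq_cylinder: "cball E x ((1/2) ^ m) = cylinder E x m"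
  by (simp add: cball_def cylinder_def cdist_le_half_power_iff)

lemma mem_cylinder_Suc_iff: "y \<in> cylinder E x (Suc k) \<longleftrightarrow> (\<forall>v\<in>gball E 0 k. y v = x v)"
  by (simp add: cylinder_def gball_def wdist_def less_Suc_eq_le)

lemma cball_mono: "r \<le> s \<Longrightarrow> cball E x r \<subseteq> cball E x s"
  by (auto simp: cball_def)

lemma wlen_attained:
  assumes "generates E"
  obtains xs where "length xs = wlen E g" "set xs \<subseteq> E" "sum_list xs = g"
proof -
  from assms obtain xs where xs: "set xs \<subseteq> E" "sum_list xs = g"
    unfolding generates_def by blast
  have "\<exists>xs. length xs = wlen E g \<and> set xs \<subseteq> E \<and> sum_list xs = g"
    unfolding wlen_def by (rule LeastI_ex) (use xs in blast)
  with that show ?thesis by blast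
qed

lemma finite_wlen_less:
  assumes "finite E" "generates E"
  shows "finite {g. wlen E g < m}"
proof -
  have "{g. wlen E g < m} \<subseteq> sum_list ` {xs. set xs \<subseteq> E \<and> length xs \<le> m}"
  proof
    fix g
    assume "g \<in> {g. wlen E g < m}"
    moreover obtain xs where "length xs = wlen E g" "set xs \<subseteq> E" "sum_list xs = g"
      using wlen_attained[OF assms(2)] .
    ultimately show "g \<in> sum_list ` {xs. set xs \<subseteq> E \<and> length xs \<le> m}"
      by force
  qed
  moreover have "finite {xs. set xs \<subseteq> E \<and> length xs \<le> m}"
    using finite_lists_length_le[OF assms(1)] by simp
  ultimately show ?thesis
    by (rule finite_surj[rotated])
qed

lemma not_sensitive_iff_cylinders:
  "\<not> sensitive E \<Phi> \<longleftrightarrow>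
    (\<forall>k. \<exists>x m. \<forall>t. \<forall>y\<in>cylinder E x m. \<forall>v\<in>gball E 0 k. (\<Phi> ^^ t) y v = (\<Phi> ^^ t) x v)"
proof
  assume ns: "\<not> sensitive E \<Phi>"
  show "\<forall>k. \<exists>x m. \<forall>t. \<forall>y\<in>cylinder E x m. \<forall>v\<in>gball E 0 k. (\<Phi> ^^ t) y v = (\<Phi> ^^ t) x v"
  proof
    fix k
    have "(0::real) < (1/2) ^ Suc k" by simp
    with ns obtain x \<delta> where "\<delta> > 0" and
      stable: "\<forall>t. \<forall>y\<in>cball E x \<delta>. (\<Phi> ^^ t) y \<in> cball E ((\<Phi> ^^ t) x) ((1/2) ^ Suc k)"
      unfolding sensitive_def by blast
    then obtain m where "(1/2::real) ^ m < \<delta>"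
      using real_arch_pow_inv[of \<delta> "1/2"] by auto
    then have "cylinder E x m \<subseteq> cball E x \<delta>"
      unfolding cball_half_power_eq_cylinder[symmetric] by (intro cball_mono) simp
    with stable show "\<exists>x m. \<forall>t. \<forall>y\<in>cylinder E x m. \<forall>v\<in>gball E 0 k. (\<Phi> ^^ t) y v = (\<Phi> ^^ t) x v"
      unfolding cball_half_power_eq_cylinder mem_cylinder_Suc_iff by blast
  qed
next
  assume cyl: "\<forall>k. \<exists>x m. \<forall>t. \<forall>y\<in>cylinder E x m. \<forall>v\<in>gball E 0 k. (\<Phi> ^^ t) y v = (\<Phi> ^^ t) x v"
  have "\<exists>x. \<exists>\<delta>>0. \<forall>t. \<forall>y\<in>cball E x \<delta>. (\<Phi> ^^ t) y \<in> cball E ((\<Phi> ^^ t) x) \<epsilon>"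
    if "\<epsilon> > 0" for \<epsilon> :: real
  proof -
    obtain k where "(1/2::real) ^ k < \<epsilon>"
      using real_arch_pow_inv[of \<epsilon> "1/2"] \<open>\<epsilon> > 0\<close> by auto
    then have shrink: "cball E z ((1/2) ^ Suc k) \<subseteq> cball E z \<epsilon>" for z
      using \<open>\<epsilon> > 0\<close> by (intro cball_mono) simp
    from cyl obtain x m where
      "\<forall>t. \<forall>y\<in>cball E x ((1/2) ^ m). (\<Phi> ^^ t) y \<in> cball E ((\<Phi> ^^ t) x) ((1/2) ^ Suc k)"
      unfolding cball_half_power_eq_cylinder mem_cylinder_Suc_iff by blast
    with shrink have "\<forall>t. \<forall>y\<in>cball E x ((1/2) ^ m). (\<Phi> ^^ t) y \<in> cball E ((\<Phi> ^^ t) x) \<epsilon>"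
      by blast
    moreover have "(0::real) < (1/2) ^ m" by simp
    ultimately show ?thesis by blast
  qed
  then show "\<not> sensitive E \<Phi>"
    unfolding sensitive_def by blast
qed

lemma blocking_iff_agree_with_pattern:
  "blocking \<Phi> V L u \<longleftrightarrow>
    (\<forall>t y. (\<forall>l\<in>L. y l = u l) \<longrightarrow> (\<forall>v\<in>V. (\<Phi> ^^ t) y v = (\<Phi> ^^ t) u v))"
proof
  assume blocking: "blocking \<Phi> V L u"
  show "\<forall>t y. (\<forall>l\<in>L. y l = u l) \<longrightarrow> (\<forall>v\<in>V. (\<Phi> ^^ t) y v = (\<Phi> ^^ t) u v)"
  proof (intro allI impI ballI)
    fix t y v
    assume "\<forall>l\<in>L. y l = u l" and "v \<in> V"
    then show "(\<Phi> ^^ t) y v = (\<Phi> ^^ t) u v"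
      using blocking[unfolded blocking_def, rule_format, where x = y and y = u and t = t] by simp
  qed
next
  assume agree: "\<forall>t y. (\<forall>l\<in>L. y l = u l) \<longrightarrow> (\<forall>v\<in>V. (\<Phi> ^^ t) y v = (\<Phi> ^^ t) u v)"
  show "blocking \<Phi> V L u"
    unfolding blocking_def
  proof (intro allI impI ballI)
    fix x y t v
    assume "\<forall>l\<in>L. x l = u l \<and> y l = u l" and "v \<in> V"
    then show "(\<Phi> ^^ t) x v = (\<Phi> ^^ t) y v"
      using agree[rule_format, where t = t and y = x] agree[rule_format, where t = t and y = y]
      by simp
  qed
qed

lemma ex_finite_blocking_iff_cylinder:
  assumes "finite E" "generates E"
  shows "(\<exists>L u. finite L \<and> blocking \<Phi> V L u) \<longleftrightarrow>
    (\<exists>x m. \<forall>t. \<forall>y\<in>cylinder E x m. \<forall>v\<in>V. (\<Phi> ^^ t) y v = (\<Phi> ^^ t) x v)"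
proof
  assume "\<exists>L u. finite L \<and> blocking \<Phi> V L u"
  then obtain L u where "finite L" and blocking: "blocking \<Phi> V L u" by blast
  then obtain m where "\<forall>l\<in>L. wlen E l < m"
    using finite_nat_set_iff_bounded[of "wlen E ` L"] by auto
  with blocking show "\<exists>x m. \<forall>t. \<forall>y\<in>cylinder E x m. \<forall>v\<in>V. (\<Phi> ^^ t) y v = (\<Phi> ^^ t) x v"
    unfolding blocking_iff_agree_with_pattern cylinder_def by blast
next
  assume "\<exists>x m. \<forall>t. \<forall>y\<in>cylinder E x m. \<forall>v\<in>V. (\<Phi> ^^ t) y v = (\<Phi> ^^ t) x v"
  then obtain x m where "blocking \<Phi> V {g. wlen E g < m} x"
    unfolding blocking_iff_agree_with_pattern cylinder_def by auto
  with finite_wlen_less[OF assms] show "\<exists>L u. finite L \<and> blocking \<Phi> V L u"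
    by blast
qed

theorem proposition2:
  fixes E :: "'g::group_add set"
    and \<Phi> :: "('g \<Rightarrow> 'a::finite) \<Rightarrow> ('g \<Rightarrow> 'a)"
  assumes "finite E"
    and "\<forall>e\<in>E. - e \<in> E"
    and "generates E"
    and "is_CA \<Phi>"
  shows "\<not> sensitive E \<Phi> \<longleftrightarrow>
    (\<forall>k::nat. \<exists>L u. finite L \<and> blocking \<Phi> (gball E 0 k) L u)"
  unfolding not_sensitive_iff_cylinders ex_finite_blocking_iff_cylinder[OF assms(1,3)] ..

end
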